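(* Let $\hat k \ge k$ and let $(\hat g, \hat q) \in \mathcal{G} \times \mathcal{Q}$ be a minimizer of $$\min_{\hat g \in \mathcal{G},\, \hat q \in \mathcal{Q}} \; \mathbb{E}_{(x,x') \sim p(x,x')}\Big[\sum_{\hat a \in \hat{\mathcal{A}}} \hat q(\hat a \mid x, x')\,\|x' - \hat g(x,\hat a)\|_2^2 + \beta\, H(\hat q(\cdot \mid x, x'))\Big],$$ where $\beta>0$. For $(x,a) \in \mathrm{supp}[p(x,a)]$ and $\hat a \in \hat{\mathcal A}$, put $v(\hat a \mid x, a) := \hat q(\hat a \mid x, g(x,a))$. Then: 1. If Assumptions A1 and A2 hold, there is a function $v : \mathrm{supp}[p(x,a)] \to \hat{\mathcal A}$ such that for all $(x,a) \in \mathrm{supp}[p(x,a)]$ and all $\hat a\in\hat{\mathcal A}$, $v(\hat a \mid x,a) = \mathbf{1}(\hat a = v(x,a))$. 2. If Assumptions A1, A2 and A3 hold, there is a map $v : \mathrm{supp}[p(a)] \to \hat{\mathcal A}$ such that for all $(x,a) \in \mathrm{supp}[p(x,a)]$ and all $\hat a\in\hat{\mathcal A}$, $v(\hat a \mid x,a) = \mathbf{1}(\hat a = v(a))$. 3. If Assumptions A1, A2, A3 and A4 hold, the map $v : \mathrm{supp}[p(a)] \to \hat{\mathcal A}$ from part 2 is injective.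
   Context: Data-generating process: $\mathcal X := [0,1]^d$, $\mathcal X' := [0,1]^{d'}$, $\mathcal A := \{1,\dots,k\}$. A state $x \in \mathcal X$ is drawn from a Lebesgue density $p(x)$ on $\mathcal X$. An action is then drawn as $a \sim \pi(a \mid x)$, where $\pi(\cdot\mid x)$ is a probability mass function on $\mathcal A$. The next observation is $x' = g(x,a)$ for a fixed function $g : \mathcal X \times \mathcal A \to \mathcal X'$. Write $p(x,a) := p(x)\pi(a\mid x)$, $p(a) := \int p(x,a)\,dx$, and $p(x\mid a) := p(x,a)/p(a)$ when $p(a)>0$. Let $p(x,x')$ denote the joint law of $(x, g(x,a))$ under this process, so $\mathbb E_{p(x,x')}[h(x,x')] = \mathbb E_{p(x,a)}[h(x,g(x,a))]$. Supports: $\mathrm{supp}[p(a)] := \{a \in \mathcal A : p(a)>0\}$. For $a \in \mathrm{supp}[p(a)]$, $\mathrm{supp}[p(x\mid a)]$ is the set of $x_0 \in \mathcal X$ such that every open neighborhood $U$ of $x_0$ satisfies $\int_U p(x\mid a)\,dx > 0$. Also $\mathrm{supp}[p(x,a)] := \bigcup_{a \in \mathrm{supp}[p(a)]} \mathrm{supp}[p(x\mid a)] \times \{a\}$. Hypothesis spaces: $\hat{\mathcal A} := \{1,\dots,\hat k\}$. $\mathcal G$ is the set of functions $\hat g : \mathcal X \times \hat{\mathcal A} \to \mathcal X'$ such that $x \mapsto \hat g(x,\hat a)$ is continuous for every $\hat a \in \hat{\mathcal A}$. $\mathcal Q$ is the set of functions $\hat q : \hat{\mathcal A} \times \mathcal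 X \times \mathcal X' \to [0,1]$ such that: (i) $\sum_{\hat a \in \hat{\mathcal A}} \hat q(\hat a \mid x,x') = 1$ for all $(x,x')$; (ii) $(x,x') \mapsto \hat q(\hat a \mid x, x')$ is continuous for every $\hat a$. Entropy: $H(\hat q(\cdot\mid x,x')) := -\sum_{\hat a} \hat q(\hat a\mid x,x')\log \hat q(\hat a \mid x,x')$, with the convention $0\log 0 = 0$. Assumptions: A1 (continuity): for all $a\in\mathcal A$, $x \mapsto g(x,a)$ is continuous. A2 (injectivity): for all $x \in \mathcal X$ and $a_1 \ne a_2$ in $\mathcal A$, $g(x,a_1) \ne g(x,a_2)$. A3: for every $a \in \mathrm{supp}[p(a)]$, $\mathrm{supp}[p(x\mid a)]$ is a connected subset of $\mathcal X$. A4: for all $a_1,a_2 \in \mathrm{supp}[p(a)]$, $\mathrm{supp}[p(x\mid a_1)] \cap \mathrm{supp}[p(x\mid a_2)] \ne \emptyset$. *)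

theory Defs
  imports "HOL-Analysis.Analysis"
begin

definition unit_cube :: "(real ^ 'n) set" where
  "unit_cube = {x. \<forall>i. 0 \<le> x $ i \<and> x $ i \<le> 1}"

text \<open>Data-generating process: density p on X, policy pi x a = pi(a|x), actions {1..k}.\<close>
definition is_density :: "(real ^ 'd \<Rightarrow> real) \<Rightarrow> bool" where
  "is_density p \<longleftrightarrow> p \<in> borel_measurable lborel \<and> (\<forall>x\<in>unit_cube. 0 \<le> p x)
     \<and> set_integrable lborel unit_cube p \<and> (LINT x:unit_cube|lborel. p x) = 1"

definition is_policy :: "nat \<Rightarrow> (real ^ 'd \<Rightarrow> nat \<Rightarrow> real) \<Rightarrow> bool" where
  "is_policy k \<pi> \<longleftrightarrow> (\<forall>a. (\<lambda>x. \<pi> x a) \<in> borel_measurable lborel)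
     \<and> (\<forall>x\<in>unit_cube. (\<forall>a\<in>{1..k}. 0 \<le> \<pi> x a) \<and> (\<Sum>a\<in>{1..k}. \<pi> x a) = 1)"

definition marg_a :: "(real ^ 'd \<Rightarrow> real) \<Rightarrow> (real ^ 'd \<Rightarrow> nat \<Rightarrow> real) \<Rightarrow> nat \<Rightarrow> real" where
  "marg_a p \<pi> a = (LINT x:unit_cube|lborel. p x * \<pi> x a)"

definition supp_a :: "(real ^ 'd \<Rightarrow> real) \<Rightarrow> (real ^ 'd \<Rightarrow> nat \<Rightarrow> real) \<Rightarrow> nat \<Rightarrow> nat set" where
  "supp_a p \<pi> k = {a \<in> {1..k}. marg_a p \<pi> a > 0}"

definition cond_dens :: "(real ^ 'd \<Rightarrow> real) \<Rightarrow> (real ^ 'd \<Rightarrow> nat \<Rightarrow> real) \<Rightarrow> nat \<Rightarrow> real ^ 'd \<Rightarrow> real" where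
  "cond_dens p \<pi> a x = p x * \<pi> x a / marg_a p \<pi> a"

definition supp_x_given_a :: "(real ^ 'd \<Rightarrow> real) \<Rightarrow> (real ^ 'd \<Rightarrow> nat \<Rightarrow> real) \<Rightarrow> nat \<Rightarrow> (real ^ 'd) set" where
  "supp_x_given_a p \<pi> a = {x0 \<in> unit_cube. \<forall>U. open U \<and> x0 \<in> U \<longrightarrow>
      (LINT x:(U \<inter> unit_cube)|lborel. cond_dens p \<pi> a x) > 0}"

definition supp_xa :: "(real ^ 'd \<Rightarrow> real) \<Rightarrow> (real ^ 'd \<Rightarrow> nat \<Rightarrow> real) \<Rightarrow> nat \<Rightarrow> ((real ^ 'd) \<times> nat) set" where
  "supp_xa p \<pi> k = (\<Union>a\<in>supp_a p \<pi> k. supp_x_given_a p \<pi> a \<times> {a})"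

definition entropy :: "nat \<Rightarrow> (nat \<Rightarrow> real) \<Rightarrow> real" where
  "entropy kh q = - (\<Sum>ah\<in>{1..kh}. if q ah = 0 then 0 else q ah * ln (q ah))"

definition G_space :: "nat \<Rightarrow> (real ^ 'd \<Rightarrow> nat \<Rightarrow> real ^ 'e) set" where
  "G_space kh = {gh. (\<forall>ah\<in>{1..kh}. continuous_on unit_cube (\<lambda>x. gh x ah))
                    \<and> (\<forall>x\<in>unit_cube. \<forall>ah\<in>{1..kh}. gh x ah \<in> unit_cube)}"

definition Q_space :: "nat \<Rightarrow> (nat \<Rightarrow> real ^ 'd \<Rightarrow> real ^ 'e \<Rightarrow> real) set" where
  "Q_space kh = {qh. (\<forall>ah\<in>{1..kh}. \<forall>x\<in>unit_cube. \<forall>x'\<in>unit_cube. 0 \<le> qh ah x x' \<and> qh ah x x' \<le> 1)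
     \<and> (\<forall>x\<in>unit_cube. \<forall>x'\<in>unit_cube. (\<Sum>ah\<in>{1..kh}. qh ah x x') = 1)
     \<and> (\<forall>ah\<in>{1..kh}. continuous_on (unit_cube \<times> unit_cube) (\<lambda>(x, x'). qh ah x x'))}"

text \<open>The objective E_{p(x,x')}[...] written as E_{p(x,a)}[... with x' = g(x,a)].\<close>
definition objective ::
  "(real ^ 'd \<Rightarrow> real) \<Rightarrow> (real ^ 'd \<Rightarrow> nat \<Rightarrow> real) \<Rightarrow> nat \<Rightarrow> (real ^ 'd \<Rightarrow> nat \<Rightarrow> real ^ 'e)
   \<Rightarrow> nat \<Rightarrow> real \<Rightarrow> (real ^ 'd \<Rightarrow> nat \<Rightarrow> real ^ 'e) \<Rightarrow> (nat \<Rightarrow> real ^ 'd \<Rightarrow> real ^ 'e \<Rightarrow> real) \<Rightarrow> real" where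
  "objective p \<pi> k g kh \<beta> gh qh =
     (\<Sum>a\<in>{1..k}. LINT x:unit_cube|lborel. p x * \<pi> x a *
        ((\<Sum>ah\<in>{1..kh}. qh ah x (g x a) * (norm (g x a - gh x ah))\<^sup>2)
         + \<beta> * entropy kh (\<lambda>ah. qh ah x (g x a))))"

definition A1 :: "nat \<Rightarrow> (real ^ 'd \<Rightarrow> nat \<Rightarrow> real ^ 'e) \<Rightarrow> bool" where
  "A1 k g \<longleftrightarrow> (\<forall>a\<in>{1..k}. continuous_on unit_cube (\<lambda>x. g x a))"

definition A2 :: "nat \<Rightarrow> (real ^ 'd \<Rightarrow> nat \<Rightarrow> real ^ 'e) \<Rightarrow> bool" where
  "A2 k g \<longleftrightarrow> (\<forall>x\<in>unit_cube. \<forall>a1\<in>{1..k}. \<forall>a2\<in>{1..k}. a1 \<noteq> a2 \<longrightarrow> g x a1 \<noteq> g x a2)"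

definition A3 :: "(real ^ 'd \<Rightarrow> real) \<Rightarrow> (real ^ 'd \<Rightarrow> nat \<Rightarrow> real) \<Rightarrow> nat \<Rightarrow> bool" where
  "A3 p \<pi> k \<longleftrightarrow> (\<forall>a\<in>supp_a p \<pi> k. connected (supp_x_given_a p \<pi> a))"

definition A4 :: "(real ^ 'd \<Rightarrow> real) \<Rightarrow> (real ^ 'd \<Rightarrow> nat \<Rightarrow> real) \<Rightarrow> nat \<Rightarrow> bool" where
  "A4 p \<pi> k \<longleftrightarrow> (\<forall>a1\<in>supp_a p \<pi> k. \<forall>a2\<in>supp_a p \<pi> k.
      supp_x_given_a p \<pi> a1 \<inter> supp_x_given_a p \<pi> a2 \<noteq> {})"

end

theory Submission
  imports Defs "HOL-Real_Asymp.Real_Asymp"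
begin

text \<open>
  Under A1 and A2 the objective can be driven to 0: keep \<open>g\<close> itself as decoder and let
  the encoder be a continuous partition of unity made of tent functions of radius \<open>\<delta>/2\<close>
  around the points \<open>g x a\<close>, which compactness of the cube makes uniformly \<open>\<delta>\<close>-separated.
  So a minimizer has objective at most 0; being a sum of integrals of \<open>p x * \<pi> x a\<close> times
  a continuous nonnegative loss, each such loss vanishes on the support of \<open>p(x|a)\<close>.
  Vanishing loss means zero entropy, i.e. a point mass, and zero reconstruction error.
  A continuous \<open>{0,1}\<close>-valued function is constant on the connected support (A3), and at
  a point shared by two supports (A4) zero reconstruction error gives
  \<open>g x a = gh x (v a)\<close>, so A2 makes \<open>v\<close> injective.
\<close>

lemma unit_cube_eq_cbox: "(unit_cube :: (real ^ 'n) set) = cbox 0 1"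
  by (auto simp: unit_cube_def mem_box_cart)

lemma compact_unit_cube: "compact (unit_cube :: (real ^ 'n) set)"
  by (simp add: unit_cube_eq_cbox)

lemma sets_lborel_unit_cube [measurable]: "(unit_cube :: (real ^ 'n) set) \<in> sets lborel"
  by (simp add: unit_cube_eq_cbox)

lemma continuous_on_x_ln_x: "continuous_on {0..} (\<lambda>t::real. t * ln t)"
proof (clarsimp simp: continuous_on_eq_continuous_within)
  fix t :: real assume "0 \<le> t"
  show "continuous (at t within {0..}) (\<lambda>t. t * ln t)"
  proof (cases "t = 0")
    case True
    have "((\<lambda>t::real. t * ln t) \<longlongrightarrow> 0) (at_right 0)" by real_asymp
    moreover have "at (0::real) within {0..} = at_right 0"
    proof -
      have "{0::real..} - {0} = {0<..}" "{0::real<..} - {0} = {0<..}" by auto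
      then show ?thesis by (simp add: at_within_def)
    qed
    ultimately show ?thesis using True by (simp add: continuous_within)
  next
    case False
    then have "isCont (\<lambda>t. t * ln t) t" using \<open>0 \<le> t\<close> by (auto intro!: continuous_intros)
    then show ?thesis by (rule continuous_at_imp_continuous_within)
  qed
qed

lemma uniformly_separated_on_compact:
  fixes f :: "'i \<Rightarrow> 'a::topological_space \<Rightarrow> 'b::metric_space"
  assumes "compact S" and "finite I" and "\<And>i. i \<in> I \<Longrightarrow> continuous_on S (f i)"
    and "\<And>x i j. x \<in> S \<Longrightarrow> i \<in> I \<Longrightarrow> j \<in> I \<Longrightarrow> i \<noteq> j \<Longrightarrow> f i x \<noteq> f j x"
  shows "\<exists>\<delta>>0. \<forall>x\<in>S. \<forall>i\<in>I. \<forall>j\<in>I. i \<noteq> j \<longrightarrow> \<delta> \<le> dist (f i x) (f j x)"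
proof -
  define T where "T = (\<Union>ij\<in>I \<times> I - Id. (\<lambda>x. dist (f (fst ij) x) (f (snd ij) x)) ` S)"
  have "compact ((\<lambda>x. dist (f i x) (f j x)) ` S)" if "i \<in> I" "j \<in> I" for i j
    using assms(1) assms(3)[OF that(1)] assms(3)[OF that(2)]
    by (intro compact_continuous_image continuous_on_dist)
  then have "compact T"
    unfolding T_def using assms(2) by (intro compact_UN) auto
  moreover have "0 \<notin> T"
    using assms(4) by (auto simp: T_def)
  ultimately obtain \<delta> where "\<delta> > 0" "\<forall>t\<in>T. \<delta> \<le> dist 0 t"
    using separate_point_closed[OF compact_imp_closed] by metis
  then show ?thesis
    by (intro exI[of _ \<delta>]) (force simp: T_def)
qed

definition tent :: "real \<Rightarrow> 'a::metric_space \<Rightarrow> 'a \<Rightarrow> real" where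
  "tent r c y = max 0 (1 - dist y c / r)"

lemma tent_bounds: "r > 0 \<Longrightarrow> 0 \<le> tent r c y \<and> tent r c y \<le> 1"
  by (auto simp: tent_def)

lemma tent_center [simp]: "tent r c c = 1"
  by (simp add: tent_def)

lemma tent_pos_iff: "r > 0 \<Longrightarrow> 0 < tent r c y \<longleftrightarrow> dist y c < r"
  by (simp add: tent_def less_max_iff_disj divide_less_eq)

lemma tent_disjoint:
  assumes "r > 0" and "2 * r \<le> dist c c'"
  shows "tent r c y = 0 \<or> tent r c' y = 0"
proof (rule ccontr)
  assume "\<not> ?thesis"
  then have "dist y c < r" "dist y c' < r"
    using tent_bounds[OF \<open>r > 0\<close>] tent_pos_iff[OF \<open>r > 0\<close>] by (metis less_eq_real_def)+
  then have "dist c c' < 2 * r"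
    using dist_triangle_less_add[of c y r c' r] by (simp add: dist_commute)
  with assms(2) show False by simp
qed

lemma continuous_on_tent [continuous_intros]:
  "continuous_on S c \<Longrightarrow> continuous_on S y \<Longrightarrow> continuous_on S (\<lambda>z. tent r (c z) (y z))"
  unfolding tent_def divide_inverse by (intro continuous_intros)

lemma sum_disjoint_le_1:
  fixes w :: "'a \<Rightarrow> real"
  assumes "finite B" and "\<forall>b\<in>B. 0 \<le> w b \<and> w b \<le> 1"
    and "\<forall>b\<in>B. \<forall>c\<in>B. b \<noteq> c \<longrightarrow> w b = 0 \<or> w c = 0"
  shows "(\<Sum>b\<in>B. w b) \<le> 1"
proof (cases "\<exists>b\<in>B. w b \<noteq> 0")
  case True
  then obtain b where b: "b \<in> B" "w b \<noteq> 0" by blast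
  have "(\<Sum>c\<in>B. w c) = w b + (\<Sum>c\<in>B - {b}. w c)"
    using assms(1) b(1) by (simp add: sum.remove)
  also have "(\<Sum>c\<in>B - {b}. w c) = 0"
    using assms(3) b by (intro sum.neutral) blast
  finally show ?thesis using assms(2) b(1) by simp
qed simp

lemma entropy_eq: "entropy kh q = - (\<Sum>ah\<in>{1..kh}. q ah * ln (q ah))"
  unfolding entropy_def by (intro arg_cong[where f=uminus] sum.cong) auto

lemma x_ln_x_nonpos: "0 \<le> t \<Longrightarrow> t \<le> 1 \<Longrightarrow> t * ln t \<le> (0::real)"
  by (cases "t = 0") (simp_all add: mult_nonneg_nonpos)

lemma entropy_nonneg:
  assumes "\<forall>ah\<in>{1..kh}. 0 \<le> q ah \<and> q ah \<le> 1"
  shows "0 \<le> entropy kh q"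
  unfolding entropy_eq neg_0_le_iff_le by (intro sum_nonpos) (use assms x_ln_x_nonpos in auto)

lemma entropy_point_mass:
  assumes "\<forall>ah\<in>{1..kh}. q ah = (if ah = v then 1 else 0)"
  shows "entropy kh q = 0"
  unfolding entropy_eq using assms by (simp add: sum.neutral)

lemma entropy_eq_0_imp_point_mass:
  assumes q01: "\<forall>ah\<in>{1..kh}. 0 \<le> q ah \<and> q ah \<le> 1" and sum1: "(\<Sum>ah\<in>{1..kh}. q ah) = 1"
    and "entropy kh q = 0"
  shows "\<exists>v\<in>{1..kh}. \<forall>ah\<in>{1..kh}. q ah = (if ah = v then 1 else 0)"
proof -
  have terms_0: "\<forall>ah\<in>{1..kh}. q ah * ln (q ah) = 0"
    using sum_nonneg_eq_0_iff[of "{1..kh}" "\<lambda>ah. - (q ah * ln (q ah))"] \<open>entropy kh q = 0\<close>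
      q01 x_ln_x_nonpos by (simp add: entropy_eq sum_negf)
  have q_0_1: "q ah = 0 \<or> q ah = 1" if "ah \<in> {1..kh}" for ah
  proof (cases "q ah = 0")
    case False
    then have "0 < q ah" and "ln (q ah) = 0"
      using q01 terms_0 that by force+
    then show ?thesis by simp
  qed simp
  obtain v where v: "v \<in> {1..kh}" "q v = 1"
    using sum1 q_0_1 by (metis sum.neutral zero_neq_one)
  have "q ah = 0" if ah: "ah \<in> {1..kh}" "ah \<noteq> v" for ah
  proof -
    have "1 = q ah + (\<Sum>b\<in>{1..kh} - {ah}. q b)"
      using sum1 ah(1) by (simp add: sum.remove)
    moreover have "q v \<le> (\<Sum>b\<in>{1..kh} - {ah}. q b)"
      using ah v(1) q01 by (intro member_le_sum) auto
    moreover have "0 \<le> q ah"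
      using ah(1) q01 by simp
    ultimately show ?thesis
      using v(2) by linarith
  qed
  then show ?thesis
    using v by (intro bexI[of _ v]) auto
qed

lemma Q_spaceD:
  assumes "qh \<in> Q_space kh" and "x \<in> unit_cube" and "x' \<in> unit_cube"
  shows "\<forall>ah\<in>{1..kh}. 0 \<le> qh ah x x' \<and> qh ah x x' \<le> 1" and "(\<Sum>ah\<in>{1..kh}. qh ah x x') = 1"
  using assms by (auto simp: Q_space_def)

lemma continuous_on_Q_space_comp:
  assumes "qh \<in> Q_space kh" and "ah \<in> {1..kh}"
    and "continuous_on unit_cube y" and "\<forall>x\<in>unit_cube. y x \<in> unit_cube"
  shows "continuous_on unit_cube (\<lambda>x. qh ah x (y x))"
proof -
  have "continuous_on (unit_cube \<times> unit_cube) (\<lambda>(x, x'). qh ah x x')"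
    using assms(1,2) by (simp add: Q_space_def)
  then have "continuous_on unit_cube (\<lambda>x. (\<lambda>(x, x'). qh ah x x') (x, y x))"
    by (rule continuous_on_compose2) (use assms(3,4) in \<open>auto intro!: continuous_intros\<close>)
  then show ?thesis by simp
qed

definition recon_error :: "nat \<Rightarrow> (real ^ 'd \<Rightarrow> nat \<Rightarrow> real ^ 'e)
    \<Rightarrow> (nat \<Rightarrow> real ^ 'd \<Rightarrow> real ^ 'e \<Rightarrow> real) \<Rightarrow> real ^ 'd \<Rightarrow> real ^ 'e \<Rightarrow> real" where
  "recon_error kh gh qh x x' = (\<Sum>ah\<in>{1..kh}. qh ah x x' * (norm (x' - gh x ah))\<^sup>2)"

definition loss :: "nat \<Rightarrow> real \<Rightarrow> (real ^ 'd \<Rightarrow> nat \<Rightarrow> real ^ 'e)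
    \<Rightarrow> (nat \<Rightarrow> real ^ 'd \<Rightarrow> real ^ 'e \<Rightarrow> real) \<Rightarrow> real ^ 'd \<Rightarrow> real ^ 'e \<Rightarrow> real" where
  "loss kh \<beta> gh qh x x' = recon_error kh gh qh x x' + \<beta> * entropy kh (\<lambda>ah. qh ah x x')"

lemma objective_eq_sum_loss:
  "objective p \<pi> k g kh \<beta> gh qh =
     (\<Sum>a\<in>{1..k}. LINT x:unit_cube|lborel. p x * \<pi> x a * loss kh \<beta> gh qh x (g x a))"
  by (simp add: objective_def loss_def recon_error_def)

lemma recon_error_point_mass:
  assumes "v \<in> {1..kh}" and "\<forall>ah\<in>{1..kh}. qh ah x x' = (if ah = v then 1 else 0)"
  shows "recon_error kh gh qh x x' = (norm (x' - gh x v))\<^sup>2"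
proof -
  have "recon_error kh gh qh x x' = (\<Sum>ah\<in>{1..kh}. if ah = v then (norm (x' - gh x ah))\<^sup>2 else 0)"
    unfolding recon_error_def using assms(2) by (intro sum.cong) auto
  then show ?thesis
    using assms(1) by simp
qed

lemma recon_error_nonneg:
  assumes "qh \<in> Q_space kh" and "x \<in> unit_cube" and "x' \<in> unit_cube"
  shows "0 \<le> recon_error kh gh qh x x'"
  using Q_spaceD(1)[OF assms] unfolding recon_error_def by (intro sum_nonneg) auto

lemma loss_eq_0_iff:
  assumes "qh \<in> Q_space kh" and "x \<in> unit_cube" and "x' \<in> unit_cube" and "\<beta> > 0"
  shows "loss kh \<beta> gh qh x x' = 0 \<longleftrightarrow>
    recon_error kh gh qh x x' = 0 \<and> entropy kh (\<lambda>ah. qh ah x x') = 0"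
  using recon_error_nonneg[OF assms(1-3)] entropy_nonneg[OF Q_spaceD(1)[OF assms(1-3)]] \<open>\<beta> > 0\<close>
  unfolding loss_def by (smt (verit) mult_eq_0_iff mult_nonneg_nonneg)

lemma loss_nonneg:
  assumes "qh \<in> Q_space kh" and "x \<in> unit_cube" and "x' \<in> unit_cube" and "\<beta> \<ge> 0"
  shows "0 \<le> loss kh \<beta> gh qh x x'"
  using recon_error_nonneg[OF assms(1-3)] entropy_nonneg[OF Q_spaceD(1)[OF assms(1-3)]] \<open>\<beta> \<ge> 0\<close>
  unfolding loss_def by simp

lemma continuous_on_loss:
  assumes "gh \<in> G_space kh" and "qh \<in> Q_space kh"
    and "continuous_on unit_cube y" and "\<forall>x\<in>unit_cube. y x \<in> unit_cube"
  shows "continuous_on unit_cube (\<lambda>x. loss kh \<beta> gh qh x (y x))"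
proof -
  have q: "continuous_on unit_cube (\<lambda>x. qh ah x (y x))" if "ah \<in> {1..kh}" for ah
    using continuous_on_Q_space_comp[OF assms(2) that assms(3,4)] .
  have "continuous_on unit_cube (\<lambda>x. qh ah x (y x) * ln (qh ah x (y x)))" if "ah \<in> {1..kh}" for ah
    by (rule continuous_on_compose2[OF continuous_on_x_ln_x q[OF that]])
      (use Q_spaceD(1)[OF assms(2)] assms(4) that in auto)
  then have entropy: "continuous_on unit_cube (\<lambda>x. entropy kh (\<lambda>ah. qh ah x (y x)))"
    unfolding entropy_eq by (intro continuous_on_minus continuous_on_sum) auto
  have "continuous_on unit_cube (\<lambda>x. gh x ah)" if "ah \<in> {1..kh}" for ah
    using assms(1) that by (simp add: G_space_def)
  then have recon: "continuous_on unit_cube (\<lambda>x. recon_error kh gh qh x (y x))"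
    unfolding recon_error_def using q assms(3) by (intro continuous_on_sum continuous_intros) auto
  show ?thesis
    unfolding loss_def by (intro continuous_intros recon entropy)
qed

lemma policy_bounds:
  assumes "is_policy k \<pi>" and "x \<in> unit_cube" and "a \<in> {1..k}"
  shows "0 \<le> \<pi> x a \<and> \<pi> x a \<le> 1"
proof -
  have "\<forall>b\<in>{1..k}. 0 \<le> \<pi> x b" and "(\<Sum>b\<in>{1..k}. \<pi> x b) = 1"
    using assms(1,2) by (auto simp: is_policy_def)
  moreover from this(1) have "\<pi> x a \<le> (\<Sum>b\<in>{1..k}. \<pi> x b)"
    using assms(3) by (intro member_le_sum) auto
  ultimately show ?thesis
    using assms(3) by simp
qed

lemma set_integrable_density_policy:
  fixes F :: "real ^ 'd \<Rightarrow> real"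
  assumes dens: "is_density p" and pol: "is_policy k \<pi>" and "a \<in> {1..k}"
    and F: "continuous_on unit_cube F"
  shows "set_integrable lborel unit_cube (\<lambda>x. p x * \<pi> x a * F x)"
proof -
  have [measurable]: "p \<in> borel_measurable lborel" "(\<lambda>x. \<pi> x a) \<in> borel_measurable lborel"
    using dens pol by (auto simp: is_density_def is_policy_def)
  obtain M where M: "\<forall>x\<in>unit_cube. norm (F x) \<le> M"
    using compact_imp_bounded[OF compact_continuous_image[OF F compact_unit_cube]]
    unfolding bounded_iff by auto
  have bound_integrable: "integrable lborel (\<lambda>x. indicator unit_cube x *\<^sub>R p x * M)"
    using dens by (simp add: is_density_def set_integrable_def)
  have [measurable]: "(\<lambda>x. indicator unit_cube x *\<^sub>R F x) \<in> borel_measurable lborel"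
    using borel_measurable_continuous_on_indicator[OF _ F] by (simp add: unit_cube_eq_cbox)
  have "(\<lambda>x. indicator unit_cube x *\<^sub>R (p x * \<pi> x a * F x)) =
      (\<lambda>x. (indicator unit_cube x *\<^sub>R F x) * p x * \<pi> x a)"
    by (auto simp: indicator_def)
  then have measurable: "(\<lambda>x. indicator unit_cube x *\<^sub>R (p x * \<pi> x a * F x)) \<in> borel_measurable lborel"
    by (simp only:) measurable
  have "norm (indicator unit_cube x *\<^sub>R (p x * \<pi> x a * F x)) \<le> norm (indicator unit_cube x *\<^sub>R p x * M)"
    for x
  proof (cases "x \<in> unit_cube")
    case True
    then have "0 \<le> p x" and \<pi>: "0 \<le> \<pi> x a \<and> \<pi> x a \<le> 1" and "\<bar>F x\<bar> \<le> M"
      using dens policy_bounds[OF pol _ \<open>a \<in> {1..k}\<close>] M by (auto simp: is_density_def)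
    then have "p x * \<pi> x a * \<bar>F x\<bar> \<le> p x * 1 * M"
      by (intro mult_mono) auto
    with True show ?thesis
      using \<open>0 \<le> p x\<close> \<pi> by (simp add: abs_mult) (meson abs_ge_self mult_left_mono order_trans)
  qed simp
  then show ?thesis
    unfolding set_integrable_def
    by (intro Bochner_Integration.integrable_bound[OF bound_integrable measurable] AE_I2)
qed

lemma nonpos_on_supp_x_given_a:
  fixes F :: "real ^ 'd \<Rightarrow> real"
  assumes F: "continuous_on unit_cube F"
    and zero: "AE x in lborel. x \<in> unit_cube \<longrightarrow> p x * \<pi> x a * F x = 0"
    and x0: "x0 \<in> supp_x_given_a p \<pi> a"
  shows "F x0 \<le> 0"
proof (rule ccontr)
  assume "\<not> F x0 \<le> 0"
  obtain U where U: "open U" "U \<inter> unit_cube = F -` {0<..} \<inter> unit_cube"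
    using F unfolding continuous_on_open_invariant by (meson open_greaterThan)
  have "x0 \<in> U"
    using U(2) x0 \<open>\<not> F x0 \<le> 0\<close> by (auto simp: supp_x_given_a_def)
  then have "(LINT x:(U \<inter> unit_cube)|lborel. cond_dens p \<pi> a x) > 0"
    using x0 U(1) by (simp add: supp_x_given_a_def)
  moreover have "(LINT x:(U \<inter> unit_cube)|lborel. cond_dens p \<pi> a x) = 0"
    unfolding set_lebesgue_integral_def
  proof (rule integral_eq_zero_AE)
    show "AE x in lborel. indicator (U \<inter> unit_cube) x *\<^sub>R cond_dens p \<pi> a x = (0::real)"
      using zero by eventually_elim (use U(2) in \<open>auto simp: cond_dens_def indicator_def\<close>)
  qed
  ultimately show False by simp
qed

lemma vanishes_on_supp_x_given_a:
  fixes F :: "real ^ 'd \<Rightarrow> real"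
  assumes dens: "is_density p" and pol: "is_policy k \<pi>" and a: "a \<in> {1..k}"
    and F: "continuous_on unit_cube F" and F_nonneg: "\<forall>x\<in>unit_cube. 0 \<le> F x"
    and integral: "(LINT x:unit_cube|lborel. p x * \<pi> x a * F x) = 0"
    and x0: "x0 \<in> supp_x_given_a p \<pi> a"
  shows "F x0 = 0"
proof -
  have nonneg: "0 \<le> indicator unit_cube x *\<^sub>R (p x * \<pi> x a * F x)" for x
    using dens policy_bounds[OF pol _ a] F_nonneg
    by (cases "x \<in> unit_cube") (auto simp: is_density_def)
  have "AE x in lborel. indicator unit_cube x *\<^sub>R (p x * \<pi> x a * F x) = (0::real)"
    using integral_nonneg_eq_0_iff_AE[OF set_integrable_density_policy[OF dens pol a F,
        unfolded set_integrable_def]] nonneg integral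
    by (simp add: set_lebesgue_integral_def)
  then have "AE x in lborel. x \<in> unit_cube \<longrightarrow> p x * \<pi> x a * F x = 0"
    by eventually_elim (simp add: indicator_def)
  then have "F x0 \<le> 0"
    using nonpos_on_supp_x_given_a[OF F _ x0] by blast
  moreover have "x0 \<in> unit_cube"
    using x0 by (simp add: supp_x_given_a_def)
  ultimately show ?thesis
    using F_nonneg by force
qed

text \<open>Index 1 takes up the mass \<open>1 - (\<Sum>b\<in>{2..k}. w b x x')\<close>, which is nonnegative as soon as
  the bumps \<open>w b\<close> have pairwise disjoint supports.\<close>

definition bump_partition :: "nat \<Rightarrow> (nat \<Rightarrow> 'a \<Rightarrow> 'b \<Rightarrow> real) \<Rightarrow> nat \<Rightarrow> 'a \<Rightarrow> 'b \<Rightarrow> real" where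
  "bump_partition k w ah x x' =
     (if ah = 1 then 1 - (\<Sum>b\<in>{2..k}. w b x x') else if ah \<in> {2..k} then w ah x x' else 0)"

lemma bump_partition_in_Q_space:
  fixes w :: "nat \<Rightarrow> real ^ 'd \<Rightarrow> real ^ 'e \<Rightarrow> real"
  assumes "1 \<le> k" and "k \<le> kh"
    and bounds: "\<And>b x x'. 0 \<le> w b x x' \<and> w b x x' \<le> 1"
    and disjoint: "\<And>b c x x'. x \<in> unit_cube \<Longrightarrow> b \<in> {2..k} \<Longrightarrow> c \<in> {2..k} \<Longrightarrow> b \<noteq> c \<Longrightarrow>
      w b x x' = 0 \<or> w c x x' = 0"
    and cont: "\<And>b. b \<in> {2..k} \<Longrightarrow> continuous_on (unit_cube \<times> unit_cube) (\<lambda>z. w b (fst z) (snd z))"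
  shows "bump_partition k w \<in> Q_space kh"
  unfolding Q_space_def
proof (intro CollectI conjI ballI)
  fix ah and x :: "real ^ 'd" and x' :: "real ^ 'e"
  assume "x \<in> unit_cube"
  have "(\<Sum>b\<in>{2..k}. w b x x') \<le> 1"
    by (rule sum_disjoint_le_1) (use bounds disjoint[OF \<open>x \<in> unit_cube\<close>] in blast)+
  moreover have "0 \<le> (\<Sum>b\<in>{2..k}. w b x x')"
    using bounds by (intro sum_nonneg) blast
  ultimately show "0 \<le> bump_partition k w ah x x'" and "bump_partition k w ah x x' \<le> 1"
    using bounds by (auto simp: bump_partition_def)
next
  fix x :: "real ^ 'd" and x' :: "real ^ 'e"
  have "{1..kh} = insert 1 {2..kh}"
    using assms(1,2) by auto
  moreover have "(\<Sum>ah\<in>{2..kh}. bump_partition k w ah x x') = (\<Sum>b\<in>{2..k}. w b x x')"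
    using assms(2) by (intro sum.mono_neutral_cong_right) (auto simp: bump_partition_def)
  ultimately show "(\<Sum>ah\<in>{1..kh}. bump_partition k w ah x x') = 1"
    by (simp add: bump_partition_def)
next
  fix ah assume "ah \<in> {1..kh}"
  have "continuous_on (unit_cube \<times> unit_cube) (\<lambda>z. bump_partition k w ah (fst z) (snd z))"
  proof (cases "ah = 1")
    case True
    then show ?thesis
      by (auto simp: bump_partition_def intro!: continuous_intros cont)
  next
    case False
    then show ?thesis
      using cont by (cases "ah \<in> {2..k}") (auto simp: bump_partition_def simp del: atLeastAtMost_iff)
  qed
  then show "continuous_on (unit_cube \<times> unit_cube) (\<lambda>(x, x'). bump_partition k w ah x x')"
    by (simp add: case_prod_unfold)
qed

lemma bump_partition_point_mass:
  assumes "a \<in> {1..k}" and "\<And>b. b \<in> {2..k} \<Longrightarrow> w b x x' = (if b = a then 1 else 0)"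
  shows "bump_partition k w ah x x' = (if ah = a then 1 else 0)"
proof -
  have "(\<Sum>b\<in>{2..k}. w b x x') = (\<Sum>b\<in>{2..k}. if b = a then 1 else 0)"
    using assms(2) by (intro sum.cong) auto
  then show ?thesis
    using assms(1) by (auto simp: bump_partition_def assms(2))
qed

lemma Q_space_point_mass_at_actions:
  fixes g :: "real ^ 'd \<Rightarrow> nat \<Rightarrow> real ^ 'e"
  assumes A1: "A1 k g" and A2: "A2 k g" and "1 \<le> k" and "k \<le> kh"
  shows "\<exists>q\<in>Q_space kh. \<forall>x\<in>unit_cube. \<forall>a\<in>{1..k}. \<forall>ah\<in>{1..kh}.
           q ah x (g x a) = (if ah = a then 1 else 0)"
proof -
  have "\<exists>\<delta>>0. \<forall>x\<in>unit_cube. \<forall>a\<in>{1..k}. \<forall>b\<in>{1..k}. a \<noteq> b \<longrightarrow> \<delta> \<le> dist (g x a) (g x b)"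
    using A1 A2 unfolding A1_def A2_def
    by (intro uniformly_separated_on_compact[OF compact_unit_cube]) auto
  then obtain \<delta> where "\<delta> > 0"
    and sep: "\<forall>x\<in>unit_cube. \<forall>a\<in>{1..k}. \<forall>b\<in>{1..k}. a \<noteq> b \<longrightarrow> \<delta> \<le> dist (g x a) (g x b)"
    by blast
  define w where "w b x x' = tent (\<delta> / 2) (g x b) x'" for b x x'
  have disjoint: "w b x x' = 0 \<or> w c x x' = 0"
    if "x \<in> unit_cube" "b \<in> {1..k}" "c \<in> {1..k}" "b \<noteq> c" for b c x x'
    unfolding w_def using sep that \<open>\<delta> > 0\<close> by (intro tent_disjoint) auto
  have "bump_partition k w \<in> Q_space kh"
  proof (rule bump_partition_in_Q_space[OF assms(3,4)])
    show "0 \<le> w b x x' \<and> w b x x' \<le> 1" for b x x'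
      unfolding w_def using \<open>\<delta> > 0\<close> by (simp add: tent_bounds)
    show "w b x x' = 0 \<or> w c x x' = 0"
      if "x \<in> unit_cube" "b \<in> {2..k}" "c \<in> {2..k}" "b \<noteq> c" for b c x x'
      using disjoint that by auto
    show "continuous_on (unit_cube \<times> unit_cube) (\<lambda>z. w b (fst z) (snd z))" if "b \<in> {2..k}" for b
    proof -
      have "continuous_on unit_cube (\<lambda>x. g x b)"
        using A1 that by (simp add: A1_def)
      then have "continuous_on (unit_cube \<times> unit_cube) (\<lambda>z. g (fst z) b)"
        by (rule continuous_on_compose2[of _ _ _ fst]) (auto intro: continuous_intros)
      then show ?thesis
        unfolding w_def by (intro continuous_intros)
    qed
  qed
  moreover have "bump_partition k w ah x (g x a) = (if ah = a then 1 else 0)"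
    if "x \<in> unit_cube" "a \<in> {1..k}" for x a ah
  proof (rule bump_partition_point_mass[OF that(2)])
    fix b assume "b \<in> {2..k}"
    then show "w b x (g x a) = (if b = a then 1 else 0)"
      using disjoint[OF that(1), of b a "g x a"] that(2) by (auto simp: w_def)
  qed
  ultimately show ?thesis by blast
qed

lemma objective_eq_0_if_point_mass:
  assumes "k \<le> kh"
    and "\<forall>x\<in>unit_cube. \<forall>a\<in>{1..k}. gh x a = g x a \<and>
           (\<forall>ah\<in>{1..kh}. qh ah x (g x a) = (if ah = a then 1 else 0))"
  shows "objective p \<pi> k g kh \<beta> gh qh = 0"
proof -
  have "loss kh \<beta> gh qh x (g x a) = 0" if "x \<in> unit_cube" "a \<in> {1..k}" for x a
    using recon_error_point_mass[of a kh qh x "g x a" gh] entropy_point_mass[of kh "\<lambda>ah. qh ah x (g x a)" a] assms that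
    by (simp add: loss_def)
  then have "(LINT x:unit_cube|lborel. p x * \<pi> x a * loss kh \<beta> gh qh x (g x a)) = 0"
    if "a \<in> {1..k}" for a
    using set_lebesgue_integral_cong[OF sets_lborel_unit_cube, of
        "\<lambda>x. p x * \<pi> x a * loss kh \<beta> gh qh x (g x a)" "\<lambda>_. 0"] that
    by simp
  then show ?thesis
    unfolding objective_eq_sum_loss by simp
qed

lemma exists_zero_objective:
  fixes g :: "real ^ 'd \<Rightarrow> nat \<Rightarrow> real ^ 'e"
  assumes A1: "A1 k g" and A2: "A2 k g" and g_range: "\<forall>x\<in>unit_cube. \<forall>a\<in>{1..k}. g x a \<in> unit_cube"
    and "1 \<le> k" and "k \<le> kh"
  shows "\<exists>gh\<in>G_space kh. \<exists>qh\<in>Q_space kh. objective p \<pi> k g kh \<beta> gh qh = 0"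
proof -
  obtain qh where "qh \<in> Q_space kh"
    and qh: "\<forall>x\<in>unit_cube. \<forall>a\<in>{1..k}. \<forall>ah\<in>{1..kh}. qh ah x (g x a) = (if ah = a then 1 else 0)"
    using Q_space_point_mass_at_actions[OF A1 A2 assms(4,5)] by blast
  define gh where "gh x ah = g x (if ah \<le> k then ah else 1)" for x ah
  have "gh \<in> G_space kh"
    unfolding G_space_def gh_def using A1 g_range \<open>1 \<le> k\<close> by (auto simp: A1_def)
  moreover have "objective p \<pi> k g kh \<beta> gh qh = 0"
    using qh \<open>k \<le> kh\<close> by (intro objective_eq_0_if_point_mass) (auto simp: gh_def)
  ultimately show ?thesis
    using \<open>qh \<in> Q_space kh\<close> by blast
qed

lemma minimizer_loss_vanishes_on_supp:
  fixes p :: "real ^ 'd \<Rightarrow> real" and g gh :: "real ^ 'd \<Rightarrow> nat \<Rightarrow> real ^ 'e"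
  assumes dens: "is_density p" and pol: "is_policy k \<pi>"
    and g_range: "\<forall>x\<in>unit_cube. \<forall>a\<in>{1..k}. g x a \<in> unit_cube"
    and "\<beta> > 0" and "kh \<ge> k" and gh: "gh \<in> G_space kh" and qh: "qh \<in> Q_space kh"
    and minimizer: "\<forall>g'\<in>G_space kh. \<forall>q'\<in>Q_space kh.
        objective p \<pi> k g kh \<beta> gh qh \<le> objective p \<pi> k g kh \<beta> g' q'"
    and A1: "A1 k g" and A2: "A2 k g" and xa: "(x, a) \<in> supp_xa p \<pi> k"
  shows "loss kh \<beta> gh qh x (g x a) = 0"
proof -
  have a: "a \<in> {1..k}" and x: "x \<in> supp_x_given_a p \<pi> a"
    using xa by (auto simp: supp_xa_def supp_a_def)
  define I where "I b = (LINT x:unit_cube|lborel. p x * \<pi> x b * loss kh \<beta> gh qh x (g x b))" for b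
  have loss_nonneg: "0 \<le> loss kh \<beta> gh qh x (g x b)" if "x \<in> unit_cube" "b \<in> {1..k}" for x b
    using loss_nonneg[OF qh] g_range that \<open>\<beta> > 0\<close> by simp
  have I_nonneg: "0 \<le> I b" if "b \<in> {1..k}" for b
    unfolding I_def set_lebesgue_integral_def
    using dens policy_bounds[OF pol _ that] loss_nonneg[OF _ that]
    by (intro integral_nonneg_AE AE_I2) (simp add: is_density_def indicator_def)
  obtain g' q' where "g' \<in> G_space kh" "q' \<in> Q_space kh" "objective p \<pi> k g kh \<beta> g' q' = 0"
    using exists_zero_objective[OF A1 A2 g_range _ \<open>kh \<ge> k\<close>] a by force
  then have "(\<Sum>b\<in>{1..k}. I b) \<le> 0"
    using minimizer by (force simp: objective_eq_sum_loss I_def)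
  then have "(\<Sum>b\<in>{1..k}. I b) = 0"
    using I_nonneg by (meson antisym sum_nonneg)
  then have "I a = 0"
    using sum_nonneg_eq_0_iff[of "{1..k}" I] I_nonneg a by blast
  moreover have "continuous_on unit_cube (\<lambda>x. loss kh \<beta> gh qh x (g x a))"
    using A1 a g_range by (intro continuous_on_loss[OF gh qh]) (auto simp: A1_def)
  moreover have "\<forall>x\<in>unit_cube. 0 \<le> loss kh \<beta> gh qh x (g x a)"
    using loss_nonneg a by blast
  ultimately show ?thesis
    using vanishes_on_supp_x_given_a[OF dens pol a _ _ _ x] by (simp add: I_def)
qed

lemma minimizer_point_mass_on_supp:
  fixes p :: "real ^ 'd \<Rightarrow> real" and g gh :: "real ^ 'd \<Rightarrow> nat \<Rightarrow> real ^ 'e"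
  assumes dens: "is_density p" and pol: "is_policy k \<pi>"
    and g_range: "\<forall>x\<in>unit_cube. \<forall>a\<in>{1..k}. g x a \<in> unit_cube"
    and "\<beta> > 0" and "kh \<ge> k" and gh: "gh \<in> G_space kh" and qh: "qh \<in> Q_space kh"
    and minimizer: "\<forall>g'\<in>G_space kh. \<forall>q'\<in>Q_space kh.
        objective p \<pi> k g kh \<beta> gh qh \<le> objective p \<pi> k g kh \<beta> g' q'"
    and A1: "A1 k g" and A2: "A2 k g" and xa: "(x, a) \<in> supp_xa p \<pi> k"
  shows "recon_error kh gh qh x (g x a) = 0"
    and "\<exists>v\<in>{1..kh}. \<forall>ah\<in>{1..kh}. qh ah x (g x a) = (if ah = v then 1 else 0)"
proof -
  have "x \<in> unit_cube" and "g x a \<in> unit_cube"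
    using xa g_range by (auto simp: supp_xa_def supp_a_def supp_x_given_a_def)
  then have "loss kh \<beta> gh qh x (g x a) = 0 \<longleftrightarrow>
      recon_error kh gh qh x (g x a) = 0 \<and> entropy kh (\<lambda>ah. qh ah x (g x a)) = 0"
    by (rule loss_eq_0_iff[OF qh _ _ \<open>\<beta> > 0\<close>])
  with minimizer_loss_vanishes_on_supp[OF assms]
  have "entropy kh (\<lambda>ah. qh ah x (g x a)) = 0"
    and "recon_error kh gh qh x (g x a) = 0"
    by simp_all
  then show "recon_error kh gh qh x (g x a) = 0"
    and "\<exists>v\<in>{1..kh}. \<forall>ah\<in>{1..kh}. qh ah x (g x a) = (if ah = v then 1 else 0)"
    using entropy_eq_0_imp_point_mass[OF Q_spaceD[OF qh \<open>x \<in> unit_cube\<close> \<open>g x a \<in> unit_cube\<close>]]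
    by simp_all
qed

lemma point_mass_constant_on_connected:
  fixes q :: "nat \<Rightarrow> 'a::topological_space \<Rightarrow> real"
  assumes "connected S" and "S \<noteq> {}" and cont: "\<And>ah. ah \<in> A \<Longrightarrow> continuous_on S (q ah)"
    and point_mass: "\<And>x. x \<in> S \<Longrightarrow> \<exists>v\<in>A. \<forall>ah\<in>A. q ah x = (if ah = v then 1 else 0)"
  shows "\<exists>v\<in>A. \<forall>x\<in>S. \<forall>ah\<in>A. q ah x = (if ah = v then 1 else 0)"
proof -
  obtain x0 where "x0 \<in> S"
    using \<open>S \<noteq> {}\<close> by blast
  then obtain v where "v \<in> A" and v: "\<forall>ah\<in>A. q ah x0 = (if ah = v then 1 else 0)"
    using point_mass by blast
  have "q ah x = q ah x0" if ah: "ah \<in> A" and x: "x \<in> S" for ah x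
  proof -
    have "q ah ` S \<subseteq> {0, 1}"
      using point_mass ah by (fastforce split: if_splits)
    then have "q ah constant_on S"
      using continuous_finite_range_constant[OF \<open>connected S\<close> cont[OF ah]] finite_subset by blast
    then show ?thesis
      using x \<open>x0 \<in> S\<close> by (auto simp: constant_on_def)
  qed
  then show ?thesis
    using \<open>v \<in> A\<close> v by (intro bexI[of _ v]) auto
qed

lemma point_mass_constant_on_supp_x_given_a:
  fixes g :: "real ^ 'd \<Rightarrow> nat \<Rightarrow> real ^ 'e"
  assumes A1: "A1 k g" and A3: "A3 p \<pi> k"
    and g_range: "\<forall>x\<in>unit_cube. \<forall>a\<in>{1..k}. g x a \<in> unit_cube"
    and qh: "qh \<in> Q_space kh" and "kh \<ge> k"
    and point_mass: "\<forall>(x, a)\<in>supp_xa p \<pi> k. \<exists>v\<in>{1..kh}. \<forall>ah\<in>{1..kh}.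
          qh ah x (g x a) = (if ah = v then 1 else 0)"
    and a: "a \<in> supp_a p \<pi> k"
  shows "\<exists>v\<in>{1..kh}. \<forall>x\<in>supp_x_given_a p \<pi> a. \<forall>ah\<in>{1..kh}.
           qh ah x (g x a) = (if ah = v then 1 else 0)"
proof (cases "supp_x_given_a p \<pi> a = {}")
  case True
  then show ?thesis
    using a \<open>kh \<ge> k\<close> by (auto simp: supp_a_def)
next
  case False
  have "a \<in> {1..k}" and "supp_x_given_a p \<pi> a \<subseteq> unit_cube"
    using a by (auto simp: supp_a_def supp_x_given_a_def)
  show ?thesis
  proof (rule point_mass_constant_on_connected[OF _ False])
    show "connected (supp_x_given_a p \<pi> a)"
      using A3 a by (simp add: A3_def)
    have "continuous_on unit_cube (\<lambda>x. g x a)" and "\<forall>x\<in>unit_cube. g x a \<in> unit_cube"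
      using A1 g_range \<open>a \<in> {1..k}\<close> by (auto simp: A1_def)
    then show "continuous_on (supp_x_given_a p \<pi> a) (\<lambda>x. qh ah x (g x a))" if "ah \<in> {1..kh}" for ah
      using continuous_on_Q_space_comp[OF qh that] continuous_on_subset
        \<open>supp_x_given_a p \<pi> a \<subseteq> unit_cube\<close> by blast
    show "\<exists>v\<in>{1..kh}. \<forall>ah\<in>{1..kh}. qh ah x (g x a) = (if ah = v then 1 else 0)"
      if "x \<in> supp_x_given_a p \<pi> a" for x
    proof -
      have "(x, a) \<in> supp_xa p \<pi> k"
        using a that by (auto simp: supp_xa_def)
      then show ?thesis
        using bspec[OF point_mass] by fastforce
    qed
  qed
qed

lemma bchoice_pairs:
  assumes "\<forall>(x, y)\<in>S. \<exists>v\<in>A. P x y v"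
  shows "\<exists>f. (\<forall>(x, y)\<in>S. f x y \<in> A) \<and> (\<forall>(x, y)\<in>S. P x y (f x y))"
proof -
  have "\<forall>z\<in>S. \<exists>v. v \<in> A \<and> P (fst z) (snd z) v"
    using assms by (simp add: case_prod_beta Bex_def)
  from bchoice[OF this] obtain f where "\<forall>z\<in>S. f z \<in> A \<and> P (fst z) (snd z) (f z)"
    by blast
  then show ?thesis
    by (intro exI[of _ "curry f"]) auto
qed

lemma action_point_mass:
  fixes g :: "real ^ 'd \<Rightarrow> nat \<Rightarrow> real ^ 'e"
  assumes "A1 k g" and "A3 p \<pi> k"
    and "\<forall>x\<in>unit_cube. \<forall>a\<in>{1..k}. g x a \<in> unit_cube"
    and "qh \<in> Q_space kh" and "kh \<ge> k"
    and "\<forall>(x, a)\<in>supp_xa p \<pi> k. \<exists>v\<in>{1..kh}. \<forall>ah\<in>{1..kh}.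
          qh ah x (g x a) = (if ah = v then 1 else 0)"
  shows "\<exists>v. (\<forall>a\<in>supp_a p \<pi> k. v a \<in> {1..kh}) \<and>
           (\<forall>(x, a)\<in>supp_xa p \<pi> k. \<forall>ah\<in>{1..kh}. qh ah x (g x a) = (if ah = v a then 1 else 0))"
proof -
  have "\<forall>a\<in>supp_a p \<pi> k. \<exists>v. v \<in> {1..kh} \<and> (\<forall>x\<in>supp_x_given_a p \<pi> a. \<forall>ah\<in>{1..kh}.
      qh ah x (g x a) = (if ah = v then 1 else 0))"
    using point_mass_constant_on_supp_x_given_a[OF assms] by blast
  from bchoice[OF this] obtain v where "\<forall>a\<in>supp_a p \<pi> k. v a \<in> {1..kh} \<and>
      (\<forall>x\<in>supp_x_given_a p \<pi> a. \<forall>ah\<in>{1..kh}. qh ah x (g x a) = (if ah = v a then 1 else 0))"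
    by blast
  then show ?thesis
    by (intro exI[of _ v]) (auto simp: supp_xa_def)
qed

lemma action_assignment_inj:
  assumes A2: "A2 k g" and A4: "A4 p \<pi> k"
    and recon: "\<forall>(x, a)\<in>supp_xa p \<pi> k. recon_error kh gh qh x (g x a) = 0"
    and v: "\<forall>a\<in>supp_a p \<pi> k. v a \<in> {1..kh}"
    and point_mass: "\<forall>(x, a)\<in>supp_xa p \<pi> k. \<forall>ah\<in>{1..kh}. qh ah x (g x a) = (if ah = v a then 1 else 0)"
  shows "inj_on v (supp_a p \<pi> k)"
proof (rule inj_onI)
  have decode: "g x a = gh x (v a)" if "a \<in> supp_a p \<pi> k" "x \<in> supp_x_given_a p \<pi> a" for x a
  proof -
    have "(x, a) \<in> supp_xa p \<pi> k"
      using that by (auto simp: supp_xa_def)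
    then have "recon_error kh gh qh x (g x a) = 0"
      and "\<forall>ah\<in>{1..kh}. qh ah x (g x a) = (if ah = v a then 1 else 0)"
      using bspec[OF recon] bspec[OF point_mass] by fastforce+
    then show ?thesis
      using recon_error_point_mass[of "v a" kh qh x "g x a" gh] v that(1) by simp
  qed
  fix a1 a2
  assume a1: "a1 \<in> supp_a p \<pi> k" and a2: "a2 \<in> supp_a p \<pi> k" and "v a1 = v a2"
  obtain x where x1: "x \<in> supp_x_given_a p \<pi> a1" and x2: "x \<in> supp_x_given_a p \<pi> a2"
    using A4 a1 a2 unfolding A4_def by blast
  then have "g x a1 = g x a2"
    using decode[OF a1 x1] decode[OF a2 x2] \<open>v a1 = v a2\<close> by simp
  moreover have "x \<in> unit_cube" and "a1 \<in> {1..k}" and "a2 \<in> {1..k}"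
    using x1 a1 a2 by (auto simp: supp_x_given_a_def supp_a_def)
  ultimately show "a1 = a2"
    using A2 unfolding A2_def by blast
qed

theorem theorem1:
  fixes p :: "real ^ 'd \<Rightarrow> real"
    and \<pi> :: "real ^ 'd \<Rightarrow> nat \<Rightarrow> real"
    and g :: "real ^ 'd \<Rightarrow> nat \<Rightarrow> real ^ 'e"
    and gh :: "real ^ 'd \<Rightarrow> nat \<Rightarrow> real ^ 'e"
    and qh :: "nat \<Rightarrow> real ^ 'd \<Rightarrow> real ^ 'e \<Rightarrow> real"
    and k kh :: nat and \<beta> :: real
  assumes dens: "is_density p"
    and pol: "is_policy k \<pi>"
    and g_range: "\<forall>x\<in>unit_cube. \<forall>a\<in>{1..k}. g x a \<in> unit_cube"
    and beta_pos: "\<beta> > 0"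
    and kh_ge: "kh \<ge> k"
    and gh_in: "gh \<in> G_space kh"
    and qh_in: "qh \<in> Q_space kh"
    and minimizer: "\<forall>g'\<in>G_space kh. \<forall>q'\<in>Q_space kh.
        objective p \<pi> k g kh \<beta> gh qh \<le> objective p \<pi> k g kh \<beta> g' q'"
  shows
    "(A1 k g \<and> A2 k g \<longrightarrow>
       (\<exists>v :: real ^ 'd \<Rightarrow> nat \<Rightarrow> nat.
          (\<forall>(x, a)\<in>supp_xa p \<pi> k. v x a \<in> {1..kh}) \<and>
          (\<forall>(x, a)\<in>supp_xa p \<pi> k. \<forall>ah\<in>{1..kh}.
              qh ah x (g x a) = (if ah = v x a then 1 else 0))))
     \<and> (A1 k g \<and> A2 k g \<and> A3 p \<pi> k \<longrightarrow>
       (\<exists>v :: nat \<Rightarrow> nat.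
          (\<forall>a\<in>supp_a p \<pi> k. v a \<in> {1..kh}) \<and>
          (\<forall>(x, a)\<in>supp_xa p \<pi> k. \<forall>ah\<in>{1..kh}.
              qh ah x (g x a) = (if ah = v a then 1 else 0))))
     \<and> (A1 k g \<and> A2 k g \<and> A3 p \<pi> k \<and> A4 p \<pi> k \<longrightarrow>
       (\<forall>v :: nat \<Rightarrow> nat.
          (\<forall>a\<in>supp_a p \<pi> k. v a \<in> {1..kh}) \<and>
          (\<forall>(x, a)\<in>supp_xa p \<pi> k. \<forall>ah\<in>{1..kh}.
              qh ah x (g x a) = (if ah = v a then 1 else 0))
          \<longrightarrow> inj_on v (supp_a p \<pi> k)))"
proof -
  note point_mass_on_supp = minimizer_point_mass_on_supp[OF assms]
  have part1: "\<exists>v. (\<forall>(x, a)\<in>supp_xa p \<pi> k. v x a \<in> {1..kh}) \<and>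
      (\<forall>(x, a)\<in>supp_xa p \<pi> k. \<forall>ah\<in>{1..kh}. qh ah x (g x a) = (if ah = v x a then 1 else 0))"
    if "A1 k g" "A2 k g"
    by (rule bchoice_pairs) (clarify, rule point_mass_on_supp(2)[OF that])
  have part2: "\<exists>v. (\<forall>a\<in>supp_a p \<pi> k. v a \<in> {1..kh}) \<and>
      (\<forall>(x, a)\<in>supp_xa p \<pi> k. \<forall>ah\<in>{1..kh}. qh ah x (g x a) = (if ah = v a then 1 else 0))"
    if "A1 k g" "A2 k g" "A3 p \<pi> k"
    by (intro action_point_mass[OF that(1,3) g_range qh_in kh_ge])
      (clarify, rule point_mass_on_supp(2)[OF that(1,2)])
  have part3: "inj_on v (supp_a p \<pi> k)"
    if "A1 k g" "A2 k g" "A4 p \<pi> k" and "\<forall>a\<in>supp_a p \<pi> k. v a \<in> {1..kh}"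
      and "\<forall>(x, a)\<in>supp_xa p \<pi> k. \<forall>ah\<in>{1..kh}. qh ah x (g x a) = (if ah = v a then 1 else 0)"
    for v
    using point_mass_on_supp(1)[OF that(1,2)]
    by (intro action_assignment_inj[OF that(2,3) _ that(4,5)]) auto
  show ?thesis
    using part1 part2 part3 by blast
qed

end
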